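(* Let $\mathcal V$ be a set of size $v$, $2\le k\le v-2$, and suppose that the code $\Gamma\subset\binom{\mathcal V}{k}$ admits a subgroup $G\le{\rm Aut}(\Gamma)\cap{\rm Sym}(\mathcal V)$ such that $\Gamma$ is $G$-neighbour-transitive and $G$ is transitive and imprimitive on $\mathcal V$. Then $\Gamma$ is one of the following: (B) for some partition $\mathcal U=\{U_1|\dots|U_b\}$ of $\mathcal V$ into $b$ parts of size $a$ with $v=ab$, $a>1$, $b>1$, $\Gamma$ is the set of all $k$-subsets $\gamma$ with $\mathcal U$-type $\mathsf t_{\mathcal U}(\gamma)=\mathsf t$, where $(\mathsf t,\text{condition})$ is one of: 1. $\{k\}$, $k\le a$; 2. $\{k-v+a,a^{b-1}\}$, $k\ge v-a$; 3. $\{1^k\}$, $k\le b$; 4. $\{(a-1)^{v-k},a^{b-v+k}\}$, $k\ge v-b$; 5. $\{c^b\}$, $k=cb$ with $1<c\le a-1$; 6. $\{\frac{k-1}2,\frac{k+1}2\}$, $k$ odd, $a\ge3$, $b=2$; 7. $\{1,2^{(k-1)/2}\}$, $k$ odd, $a=2$, $b\ge3$; (C) for some partition $\mathcal U=\{U_1|\dots|U_b\}$ of $\mathcal V$ into $b$ parts of size $a$ with $v=ab$, $a>1$, $b\ge4$, with $k=ak_0$, $1\le k_0\le b-1$, and some $\Gamma_0\subseteq\binom{\mathcal U}{k_0}$, $\Gamma$ is the set of all $k$-subsets $\bigcup_{U\in\gamma_0}U$ with $\gamma_0\in\Gamma_0$.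
   Context: The Johnson graph $J(v,k)$ has vertex set $\binom{\mathcal V}{k}$, two $k$-subsets adjacent iff they meet in $k-1$ points. A code is a proper non-empty subset $\Gamma\subset\binom{\mathcal V}{k}$; its neighbour set $\Gamma_1$ is the set of $k$-subsets not in $\Gamma$ adjacent to some codeword; ${\rm Aut}(\Gamma)$ is the setwise stabiliser of $\Gamma$ in ${\rm Aut}(J(v,k))$; $\Gamma$ is $G$-neighbour-transitive if $G$ is transitive on both $\Gamma$ and $\Gamma_1$. The $\mathcal U$-type $\mathsf t_{\mathcal U}(\gamma)$ of $\gamma\subseteq\mathcal V$ is the multiset of the numbers $|\gamma\cap U_i|$, written exponentially ($i^m$: $m$ parts meet $\gamma$ in $i$ points) with zero entries omitted. *)

theory Defs
  imports Main "HOL-Library.Disjoint_Sets" "HOL-Library.Multiset" "HOL-Combinatorics.Permutations"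
begin

definition ksubsets :: "'a set \<Rightarrow> nat \<Rightarrow> 'a set set" where
  "ksubsets V k = {x. x \<subseteq> V \<and> card x = k}"

definition johnson_adj :: "nat \<Rightarrow> 'a set \<Rightarrow> 'a set \<Rightarrow> bool" where
  "johnson_adj k x y \<longleftrightarrow> card (x \<inter> y) = k - 1"

definition is_code :: "'a set \<Rightarrow> nat \<Rightarrow> 'a set set \<Rightarrow> bool" where
  "is_code V k C \<longleftrightarrow> C \<subseteq> ksubsets V k \<and> C \<noteq> {} \<and> C \<noteq> ksubsets V k"

definition neighbours :: "'a set \<Rightarrow> nat \<Rightarrow> 'a set set \<Rightarrow> 'a set set" where
  "neighbours V k C = {y \<in> ksubsets V k. y \<notin> C \<and> (\<exists>x\<in>C. johnson_adj k x y)}"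

text \<open>G is a subgroup of Sym(V) (permutations as functions fixing everything outside V).\<close>
definition perm_group_on :: "'a set \<Rightarrow> ('a \<Rightarrow> 'a) set \<Rightarrow> bool" where
  "perm_group_on V G \<longleftrightarrow> id \<in> G \<and> (\<forall>g\<in>G. g permutes V) \<and>
     (\<forall>g\<in>G. \<forall>h\<in>G. g \<circ> h \<in> G) \<and> (\<forall>g\<in>G. inv g \<in> G)"

definition stabilises_code :: "('a \<Rightarrow> 'a) set \<Rightarrow> 'a set set \<Rightarrow> bool" where
  "stabilises_code G C \<longleftrightarrow> (\<forall>g\<in>G. (\<lambda>x. g ` x) ` C = C)"

definition transitive_on_sets :: "('a \<Rightarrow> 'a) set \<Rightarrow> 'a set set \<Rightarrow> bool" where
  "transitive_on_sets G X \<longleftrightarrow> (\<forall>x\<in>X. \<forall>y\<in>X. \<exists>g\<in>G. g ` x = y)"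

definition neighbour_transitive :: "'a set \<Rightarrow> nat \<Rightarrow> ('a \<Rightarrow> 'a) set \<Rightarrow> 'a set set \<Rightarrow> bool" where
  "neighbour_transitive V k G C \<longleftrightarrow>
     transitive_on_sets G C \<and> transitive_on_sets G (neighbours V k C)"

definition transitive_on :: "'a set \<Rightarrow> ('a \<Rightarrow> 'a) set \<Rightarrow> bool" where
  "transitive_on V G \<longleftrightarrow> (\<forall>x\<in>V. \<forall>y\<in>V. \<exists>g\<in>G. g x = y)"

definition imprimitive_on :: "'a set \<Rightarrow> ('a \<Rightarrow> 'a) set \<Rightarrow> bool" where
  "imprimitive_on V G \<longleftrightarrow> (\<exists>P. partition_on V P \<and> P \<noteq> {V} \<and> P \<noteq> (\<lambda>x. {x}) ` V \<and>
     (\<forall>g\<in>G. \<forall>U\<in>P. g ` U \<in> P))"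

definition uniform_partition :: "'a set \<Rightarrow> 'a set set \<Rightarrow> nat \<Rightarrow> nat \<Rightarrow> bool" where
  "uniform_partition V P a b \<longleftrightarrow> partition_on V P \<and> finite P \<and> card P = b \<and> (\<forall>U\<in>P. card U = a)"

definition utype :: "'a set set \<Rightarrow> 'a set \<Rightarrow> nat multiset" where
  "utype P x = filter_mset (\<lambda>i. i \<noteq> 0) (image_mset (\<lambda>U. card (x \<inter> U)) (mset_set P))"

definition nz :: "nat multiset \<Rightarrow> nat multiset" where
  "nz t = filter_mset (\<lambda>i. i \<noteq> 0) t"

definition type_code :: "'a set \<Rightarrow> nat \<Rightarrow> 'a set set \<Rightarrow> nat multiset \<Rightarrow> 'a set set" where
  "type_code V k P t = {x \<in> ksubsets V k. utype P x = nz t}"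

end

theory Submission
  imports Defs
begin

text \<open>
  Fix a \<open>G\<close>-invariant block system \<open>\<U>\<close> with \<open>b\<close> blocks of size \<open>a\<close>. The \<open>\<U>\<close>-type of a
  \<open>k\<close>-subset is \<open>G\<close>-invariant, so all codewords share one type and so do all neighbours.
  Exchanging a point of a codeword \<open>x\<close> for a point outside it gives a \<open>k\<close>-subset adjacent to
  \<open>x\<close>. When \<open>x\<close> meets some block in neither \<open>0\<close> nor \<open>a\<close> points, some exchange changes the
  type and hence yields a neighbour; consequently an adjacent subset of the same type as \<open>x\<close>
  cannot be a neighbour and is a codeword. Moreover, all type-changing exchanges alter the type in
  the same way, which pins down the shape of the type: a case analysis leaves exactly the seven
  types of (B). A descent on \<open>|x - y|\<close> through type-preserving exchanges then shows that every
  \<open>k\<close>-subset of the type of the codewords is a codeword. If instead no codeword meets a block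
  partially, the codewords are unions of blocks, which is (C), or (B) when \<open>b \<le> 3\<close>.
\<close>

text \<open>Two exchanges moving a point out of blocks holding \<open>u\<close>, \<open>u'\<close> points into blocks holding
  \<open>w\<close>, \<open>w'\<close> points change the type by the same amount only if \<open>u = u'\<close> and \<open>w = w'\<close>.\<close>
lemma exchanged_values_unique:
  fixes u w u' w' :: nat
  assumes eq: "{#u - 1, w + 1#} + {#u', w'#} = {#u' - 1, w' + 1#} + {#u, w#}"
    and "0 < u" "0 < u'" "u \<noteq> w + 1" "u' \<noteq> w' + 1"
  shows "u = u' \<and> w = w'"
proof -
  have cnt: "\<And>v. count ({#u - 1, w + 1#} + {#u', w'#}) v = count ({#u' - 1, w' + 1#} + {#u, w#}) v"
    using eq by simp
  have "u = u' \<or> u = w'" using cnt[of u] assms(2-5) by (auto split: if_splits)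
  moreover have "u' = u \<or> u' = w" using cnt[of u'] assms(2-5) by (auto split: if_splits)
  moreover have "w = w'" if "u = u'" using cnt[of w] that by (auto split: if_splits)
  moreover have "u = u'" if "u = w'" "u' = w" using cnt[of "u - 1"] that assms(2-5)
    by (auto split: if_splits)
  ultimately show ?thesis by blast
qed

lemma mset_eq_if_nonzero_part_eq:
  fixes M N :: "nat multiset"
  assumes "size M = size N" "filter_mset (\<lambda>i. i \<noteq> 0) M = filter_mset (\<lambda>i. i \<noteq> 0) N"
  shows "M = N"
proof -
  have size_split: "size L = count L 0 + size (filter_mset (\<lambda>i. i \<noteq> 0) L)" for L :: "nat multiset"
    by (metis count_conv_size_mset multiset_partition size_union)
  have "count M 0 = count N 0" using size_split[of M] size_split[of N] assms by simp
  moreover have "count M v = count N v" if "v \<noteq> 0" for v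
    using arg_cong[OF assms(2), of "\<lambda>L. count L v"] that by simp
  ultimately show ?thesis by (metis multiset_eqI)
qed

lemma mset_two_values:
  assumes "set_mset M \<subseteq> {u, v}" "u \<noteq> v"
  shows "M = replicate_mset (count M u) u + replicate_mset (count M v) v"
proof (rule multiset_eqI)
  fix w
  show "count M w = count (replicate_mset (count M u) u + replicate_mset (count M v) v) w"
    using assms count_inI[of M w] by auto
qed

lemma filter_replicate_mset [simp]:
  "filter_mset Q (replicate_mset n x) = (if Q x then replicate_mset n x else {#})"
  by (induction n) auto

lemma sum_mset_filter_nonzero: "sum_mset (filter_mset (\<lambda>i. i \<noteq> 0) M) = sum_mset (M :: nat multiset)"
  by (induction M) auto

abbreviation exchange :: "'a set \<Rightarrow> 'a \<Rightarrow> 'a \<Rightarrow> 'a set" where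
  "exchange x p q \<equiv> insert q (x - {p})"

lemma card_exchange_diff_less:
  assumes "finite x" "p \<in> x" "p \<notin> y" "q \<in> y"
  shows "card (exchange x p q - y) < card (x - y)"
proof -
  have "exchange x p q - y = (x - y) - {p}" using assms by auto
  then show ?thesis using card_Diff1_less[of "x - y" p] assms by simp
qed

lemma card_exchange_diff_eq:
  assumes "finite x" "p \<in> x" "p \<notin> y" "q \<notin> x" "q \<notin> y"
  shows "card (exchange x p q - y) = card (x - y)"
proof -
  have "exchange x p q - y = insert q ((x - y) - {p})" using assms by auto
  then show ?thesis using assms card_Suc_Diff1[of "x - y" p] by simp
qed

lemma descent_reaches:
  assumes "x \<in> C" "Q x"
    and step: "\<And>x. \<lbrakk>x \<in> C; Q x; x \<noteq> y\<rbrakk> \<Longrightarrow> \<exists>x'\<in>C. Q x' \<and> card (x' - y) < card (x - y)"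
  shows "y \<in> C"
  using assms(1,2)
proof (induction "card (x - y)" arbitrary: x rule: less_induct)
  case less
  then show ?case using step by (cases "x = y") blast+
qed

section \<open>Moves that change the type\<close>

text \<open>With \<open>s U\<close> the number of points of a set in block \<open>U\<close>, moving one of its points from \<open>U\<close>
  to \<open>W\<close> changes the multiset of the values of \<open>s\<close> exactly when \<open>s U \<noteq> s W + 1\<close>.\<close>
definition changing_move :: "'b set \<Rightarrow> nat \<Rightarrow> ('b \<Rightarrow> nat) \<Rightarrow> 'b \<Rightarrow> 'b \<Rightarrow> bool" where
  "changing_move P a s U W \<longleftrightarrow> U \<in> P \<and> W \<in> P \<and> U \<noteq> W \<and> 0 < s U \<and> s W < a \<and> s U \<noteq> s W + 1"

locale unique_changing_move =
  fixes P :: "'b set" and a :: nat and s :: "'b \<Rightarrow> nat"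
  assumes two_le_a: "2 \<le> a"
    and le_a: "U \<in> P \<Longrightarrow> s U \<le> a"
    and unique: "changing_move P a s U W \<Longrightarrow> changing_move P a s U' W' \<Longrightarrow> s U = s U' \<and> s W = s W'"
begin

lemma repeated_partial_value:
  assumes "i \<in> P" "j \<in> P" "i \<noteq> j" "0 < s i" "s i < a" "s j = s i"
  shows "(\<forall>U\<in>P. s U \<le> 1) \<or> (\<forall>U\<in>P. a - 1 \<le> s U) \<or> (\<exists>c. \<forall>U\<in>P. s U = c)"
proof -
  have ij: "changing_move P a s i j" using assms by (auto simp: changing_move_def)
  have no_move: "\<not> changing_move P a s U W" if "s U \<noteq> s i \<or> s W \<noteq> s i" for U W
    using unique[OF ij] that assms by fastforce
  have empty: "s i = 1" if "U \<in> P" "s U = 0" for U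
    using no_move[of i U] that assms by (auto simp: changing_move_def)
  have full: "s i = a - 1" if "U \<in> P" "s U = a" for U
    using no_move[of U i] that assms by (auto simp: changing_move_def)
  have no_empty_and_full: False if "U \<in> P" "s U = a" "W \<in> P" "s W = 0" for U W
    using no_move[of U W] that assms two_le_a by (auto simp: changing_move_def)
  have partial: "s U = s i" if "U \<in> P" "0 < s U" "s U < a" for U
    using no_move[of U i] no_move[of i U] that assms
      by (cases "U = i"; cases "s U = s i") (auto simp: changing_move_def)
  have trichotomy: "s U = 0 \<or> s U = s i \<or> s U = a" if "U \<in> P" for U
    using partial[OF that] le_a[OF that] by fastforce
  show ?thesis
  proof (cases "\<exists>W\<in>P. s W = 0")
    case True
    then obtain W where W: "W \<in> P" "s W = 0" by blast
    have "s U \<le> 1" if "U \<in> P" for U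
      using trichotomy[OF that] empty[OF W] no_empty_and_full[OF that _ W] by auto
    then show ?thesis by blast
  next
    case no_empty: False
    show ?thesis
    proof (cases "\<exists>W\<in>P. s W = a")
      case True
      then obtain W where W: "W \<in> P" "s W = a" by blast
      have "a - 1 \<le> s U" if "U \<in> P" for U
        using trichotomy[OF that] full[OF W] no_empty that by auto
      then show ?thesis by blast
    next
      case False
      then have "\<forall>U\<in>P. s U = s i" using trichotomy no_empty by blast
      then show ?thesis by blast
    qed
  qed
qed

lemma two_partial_blocks:
  assumes "l \<in> P" "h \<in> P" "0 < s l" "s l < s h" "s h < a"
    and distinct_values: "\<And>U W. \<lbrakk>U \<in> P; W \<in> P; U \<noteq> W; 0 < s U \<and> s U < a; 0 < s W \<and> s W < a\<rbrakk>
      \<Longrightarrow> s U \<noteq> s W"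
  shows "P = {l, h} \<and> s h = s l + 1"
proof -
  have lh: "changing_move P a s l h" using assms by (auto simp: changing_move_def)
  have not_move: False if "changing_move P a s U W" "s U \<noteq> s l" for U W
    using unique[OF lh that(1)] that(2) by simp
  have succ: "s h = s l + 1"
  proof (rule ccontr)
    assume "s h \<noteq> s l + 1"
    then have "changing_move P a s h l" using assms by (auto simp: changing_move_def)
    from not_move[OF this] show False using assms by simp
  qed
  have "U = l \<or> U = h" if "U \<in> P" for U
  proof (rule ccontr)
    assume U: "\<not> (U = l \<or> U = h)"
    consider "s U = 0" | "s U = s h" | "0 < s U" "s U \<noteq> s l + 1"
      using succ by fastforce
    then show False
    proof cases
      case 1
      then have "changing_move P a s h U" using assms succ U that by (auto simp: changing_move_def)
      from not_move[OF this] show False using assms by simp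
    next
      case 2
      then show False using distinct_values[OF that \<open>h \<in> P\<close>] U assms by auto
    next
      case 3
      then have "changing_move P a s U l" using assms U that by (auto simp: changing_move_def)
      from unique[OF lh this] show False using assms by simp
    qed
  qed
  then show ?thesis using assms succ by blast
qed

lemma single_partial_block:
  assumes "i \<in> P" "0 < s i" "s i < a"
    and others: "\<And>U. \<lbrakk>U \<in> P; U \<noteq> i\<rbrakk> \<Longrightarrow> s U = 0 \<or> s U = a"
  shows "(\<forall>U\<in>P. U \<noteq> i \<longrightarrow> s U = 0) \<or> (\<forall>U\<in>P. U \<noteq> i \<longrightarrow> s U = a) \<or> a = 2 \<and> s i = 1"
proof -
  have "a = 2 \<and> s i = 1"
    if mixed: "\<not> (\<forall>U\<in>P. U \<noteq> i \<longrightarrow> s U = a)" "\<not> (\<forall>U\<in>P. U \<noteq> i \<longrightarrow> s U = 0)"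
  proof -
    obtain E F where E: "E \<in> P" "E \<noteq> i" "s E = 0" and F: "F \<in> P" "F \<noteq> i" "s F = a"
      using others mixed by blast
    have FE: "changing_move P a s F E" using E F two_le_a by (auto simp: changing_move_def)
    have "s i = 1"
    proof (rule ccontr)
      assume "s i \<noteq> 1"
      then have "changing_move P a s i E" using assms E by (auto simp: changing_move_def)
      from unique[OF FE this] show False using assms F by simp
    qed
    moreover have "a = 2"
    proof (rule ccontr)
      assume "a \<noteq> 2"
      then have "changing_move P a s F i" using assms F \<open>s i = 1\<close> by (auto simp: changing_move_def)
      from unique[OF FE this] show False using E \<open>s i = 1\<close> by simp
    qed
    ultimately show ?thesis by simp
  qed
  then show ?thesis by blast
qed

lemma partial_value_cases:
  assumes "i \<in> P" "0 < s i" "s i < a"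
  obtains (repeated) j j' where "j \<in> P" "j' \<in> P" "j \<noteq> j'" "0 < s j \<and> s j < a" "s j' = s j"
    | (distinct) l h where "l \<in> P" "h \<in> P" "0 < s l" "s l < s h" "s h < a"
        "\<And>U W. \<lbrakk>U \<in> P; W \<in> P; U \<noteq> W; 0 < s U \<and> s U < a; 0 < s W \<and> s W < a\<rbrakk>
          \<Longrightarrow> s U \<noteq> s W"
    | (single) "\<And>U. \<lbrakk>U \<in> P; U \<noteq> i\<rbrakk> \<Longrightarrow> s U = 0 \<or> s U = a"
proof -
  let ?partial = "\<lambda>U. 0 < s U \<and> s U < a"
  show thesis
  proof (cases "\<exists>U\<in>P. \<exists>W\<in>P. U \<noteq> W \<and> ?partial U \<and> ?partial W \<and> s U = s W")
    case True
    then show ?thesis using that(1) by metis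
  next
    case distinct_values: False
    show ?thesis
    proof (cases "\<exists>U\<in>P. U \<noteq> i \<and> ?partial U")
      case True
      then obtain U where U: "U \<in> P" "U \<noteq> i" "?partial U" by blast
      then have "s U \<noteq> s i" using distinct_values assms by blast
      then show ?thesis
        using that(2)[of i U] that(2)[of U i] distinct_values assms U by (meson linorder_neqE_nat)
    next
      case False
      then show ?thesis using that(3) le_a by (meson le_neq_implies_less not_gr0)
    qed
  qed
qed

theorem profile_classification:
  assumes "i \<in> P" "0 < s i" "s i < a"
  obtains (single) U0 where "U0 \<in> P" "0 < s U0" "\<forall>U\<in>P. U \<noteq> U0 \<longrightarrow> s U = 0"
    | (cosingle) U0 where "U0 \<in> P" "s U0 < a" "\<forall>U\<in>P. U \<noteq> U0 \<longrightarrow> s U = a"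
    | (spread) "\<forall>U\<in>P. s U \<le> 1"
    | (cospread) "\<forall>U\<in>P. a - 1 \<le> s U"
    | (uniform) c where "\<forall>U\<in>P. s U = c"
    | (two_blocks) l h where "P = {l, h}" "l \<noteq> h" "0 < s l" "s h = s l + 1" "s h < a"
    | (pairs) U0 where "a = 2" "U0 \<in> P" "s U0 = 1" "\<forall>U\<in>P. U \<noteq> U0 \<longrightarrow> s U \<noteq> 1"
  using assms
proof (cases rule: partial_value_cases)
  case (repeated j j')
  then show ?thesis using repeated_partial_value[of j j'] that(3-5) by blast
next
  case (distinct l h)
  then show ?thesis using two_partial_blocks[OF distinct] that(6) by blast
next
  case single
  consider "\<forall>U\<in>P. U \<noteq> i \<longrightarrow> s U = 0" | "\<forall>U\<in>P. U \<noteq> i \<longrightarrow> s U = a" | "a = 2" "s i = 1"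
    using single_partial_block[OF assms single] by blast
  then show ?thesis
  proof cases
    case 3
    then have "\<forall>U\<in>P. U \<noteq> i \<longrightarrow> s U \<noteq> 1" using single by fastforce
    then show ?thesis using that(7) 3 assms by blast
  qed (use that(1,2) assms in blast)+
qed

end

lemma no_changing_move:
  assumes "finite P" "2 \<le> card P" "2 \<le> a" "\<And>U. U \<in> P \<Longrightarrow> s U \<le> a"
    and "i \<in> P" "0 < s i" "s i < a"
    and none: "\<And>U W. \<not> changing_move P a s U W"
  shows "(\<Sum>U\<in>P. s U) = 1 \<or> (\<Sum>U\<in>P. s U) + 1 = a * card P"
proof -
  have move: "s U = s W + 1" if "U \<in> P" "W \<in> P" "U \<noteq> W" "0 < s U" "s W < a" for U W
    using none[of U W] that by (auto simp: changing_move_def)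
  have others: "s U = 0 \<or> s U = a" if "U \<in> P" "U \<noteq> i" for U
  proof (rule ccontr)
    assume "\<not> (s U = 0 \<or> s U = a)"
    then have "0 < s U" "s U < a" using assms(4)[OF that(1)] by auto
    then show False using move[of i U] move[of U i] that assms(5-7) by auto
  qed
  obtain j where j: "j \<in> P" "j \<noteq> i"
    using assms(1,2,5) by (metis card_le_Suc0_iff_eq not_less_eq_eq numeral_2_eq_2)
  have sum: "(\<Sum>U\<in>P. s U) = s i + (\<Sum>U\<in>P - {i}. s U)"
    using assms(1,5) by (simp add: sum.remove)
  show ?thesis
  proof (cases "\<forall>U\<in>P - {i}. s U = 0")
    case True
    then have "s i = 1" using move[of i j] j assms by simp
    then show ?thesis using sum True by simp
  next
    case False
    then obtain F where F: "F \<in> P" "F \<noteq> i" "s F = a" using others by blast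
    have "s U = a" if "U \<in> P - {i}" for U
      using move[of F U] others[of U] that F assms by fastforce
    then have "(\<Sum>U\<in>P - {i}. s U) = (card P - 1) * a" using assms(1,5) by simp
    moreover have "a = s i + 1" using move[of F i] F assms by simp
    ultimately have "(\<Sum>U\<in>P. s U) + 1 = a + (card P - 1) * a" using sum by simp
    also have "\<dots> = a * card P" using assms(2) by (cases "card P") auto
    finally show ?thesis by simp
  qed
qed

section \<open>Block systems and types\<close>

lemma type_code_add_zeros: "type_code V k P (replicate_mset n 0 + t) = type_code V k P t"
  by (simp add: type_code_def nz_def)

locale block_system =
  fixes V :: "'a set" and G :: "('a \<Rightarrow> 'a) set" and P :: "'a set set"
  assumes finite_V: "finite V"
    and perm_group: "perm_group_on V G"
    and transitive: "transitive_on V G"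
    and partition: "partition_on V P"
    and block_image: "\<And>g U. g \<in> G \<Longrightarrow> U \<in> P \<Longrightarrow> g ` U \<in> P"
begin

lemma finite_P: "finite P"
  using finite_elements[OF finite_V partition] .

lemma block_subset: "U \<in> P \<Longrightarrow> U \<subseteq> V"
  using partition by (auto simp: partition_on_def)

lemma finite_block: "U \<in> P \<Longrightarrow> finite U"
  using block_subset finite_V finite_subset by blast

lemma blocks_disjoint: "U \<in> P \<Longrightarrow> W \<in> P \<Longrightarrow> U \<noteq> W \<Longrightarrow> U \<inter> W = {}"
  using disjointD[OF partition_onD2[OF partition]] by blast

lemma block_unique: "U \<in> P \<Longrightarrow> W \<in> P \<Longrightarrow> p \<in> U \<Longrightarrow> p \<in> W \<Longrightarrow> U = W"
  using blocks_disjoint by blast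

lemma point_in_block: "p \<in> V \<Longrightarrow> \<exists>U\<in>P. p \<in> U"
  using partition by (auto simp: partition_on_def)

lemma group_permutes: "g \<in> G \<Longrightarrow> g permutes V"
  using perm_group by (simp add: perm_group_on_def)

lemma group_inj: "g \<in> G \<Longrightarrow> inj g"
  using group_permutes permutes_inj by blast

lemma blocks_image: "g \<in> G \<Longrightarrow> (\<lambda>U. g ` U) ` P = P"
proof
  assume g: "g \<in> G"
  then show "(\<lambda>U. g ` U) ` P \<subseteq> P" using block_image by blast
  have "inv g \<in> G" using g perm_group by (simp add: perm_group_on_def)
  moreover have "g ` inv g ` U = U" for U
    using group_permutes[OF g] by (simp add: image_comp permutes_inverses(1) comp_def)
  ultimately show "P \<subseteq> (\<lambda>U. g ` U) ` P" using block_image by (metis image_eqI subsetI)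
qed

lemma blocks_transitive: "U \<in> P \<Longrightarrow> W \<in> P \<Longrightarrow> \<exists>g\<in>G. g ` U = W"
proof -
  assume U: "U \<in> P" and W: "W \<in> P"
  obtain u w where "u \<in> U" "w \<in> W"
    using U W partition_onD3[OF partition] by (metis all_not_in_conv)
  moreover obtain g where "g \<in> G" "g u = w"
    using transitive block_subset U W \<open>u \<in> U\<close> \<open>w \<in> W\<close> by (meson subsetD transitive_on_def)
  ultimately show ?thesis using block_image U W block_unique by (metis imageI)
qed

text \<open>All blocks have the same size, by transitivity of \<open>G\<close> (see \<open>card_block\<close>).\<close>
definition a :: nat where "a = card (SOME U. U \<in> P)"

definition b :: nat where "b = card P"

lemma card_block: "U \<in> P \<Longrightarrow> card U = a"
proof -
  assume U: "U \<in> P"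
  then have "(SOME U. U \<in> P) \<in> P" by (rule someI)
  then obtain g where "g \<in> G" "g ` U = (SOME U. U \<in> P)" using blocks_transitive U by blast
  then show ?thesis unfolding a_def by (metis card_image group_inj inj_on_subset subset_UNIV)
qed

lemma card_eq_sum_blocks: "x \<subseteq> V \<Longrightarrow> card x = (\<Sum>U\<in>P. card (x \<inter> U))"
proof -
  assume "x \<subseteq> V"
  then have "x = (\<Union>U\<in>P. x \<inter> U)" using partition by (auto simp: partition_on_def)
  also have "card \<dots> = (\<Sum>U\<in>P. card (x \<inter> U))"
    using finite_P finite_block blocks_disjoint by (intro card_UN_disjoint) auto
  finally show ?thesis .
qed

lemma card_V: "card V = a * b"
  using card_eq_sum_blocks[of V] block_subset card_block by (simp add: Int_absorb1 b_def)

lemma card_Int_block_le: "U \<in> P \<Longrightarrow> card (x \<inter> U) \<le> a"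
  using card_block finite_block card_mono by (metis inf_le2)

lemma block_subset_iff_card: "U \<in> P \<Longrightarrow> U \<subseteq> x \<longleftrightarrow> card (x \<inter> U) = a"
  using card_block finite_block card_subset_eq[of U "x \<inter> U"]
    by (metis Int_absorb1 inf_commute inf_le2)

lemma uniform_partition: "uniform_partition V P a b"
  using partition finite_P card_block by (simp add: uniform_partition_def b_def)

lemma card_Union_blocks: "S \<subseteq> P \<Longrightarrow> card (\<Union>S) = a * card S"
proof -
  assume S: "S \<subseteq> P"
  moreover have "pairwise disjnt S"
    using S blocks_disjoint unfolding pairwise_def disjnt_def by blast
  ultimately have "card (\<Union>S) = sum card S"
    using finite_block by (intro card_Union_disjoint) auto
  also have "\<dots> = a * card S" using S card_block by (simp add: subset_iff)
  finally show ?thesis .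
qed

text \<open>The \<open>\<U>\<close>-type with the zero entries kept; \<open>utype P x\<close> is its nonzero part.\<close>
definition profile :: "'a set \<Rightarrow> nat multiset" where
  "profile x = image_mset (\<lambda>U. card (x \<inter> U)) (mset_set P)"

lemma utype_eq_profile: "utype P x = filter_mset (\<lambda>i. i \<noteq> 0) (profile x)"
  by (simp add: utype_def profile_def)

lemma count_profile: "count (profile x) v = card {U \<in> P. card (x \<inter> U) = v}"
  unfolding profile_def count_image_mset using finite_P
  by (simp add: Collect_conj_eq Int_commute vimage_def)

lemma in_profile: "v \<in># profile x \<longleftrightarrow> (\<exists>U\<in>P. card (x \<inter> U) = v)"
  using finite_P by (auto simp: profile_def)

lemma size_profile: "size (profile x) = b"
  by (simp add: profile_def b_def)

lemma sum_profile: "x \<subseteq> V \<Longrightarrow> sum_mset (profile x) = card x"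
  by (simp add: profile_def card_eq_sum_blocks sum_unfold_sum_mset)

lemma profile_image: "g \<in> G \<Longrightarrow> profile (g ` x) = profile x"
proof -
  assume g: "g \<in> G"
  have inj: "inj_on (\<lambda>U. g ` U) P" using group_inj[OF g] by (simp add: inj_on_def inj_image_eq_iff)
  have "profile (g ` x) = image_mset (\<lambda>U. card (g ` x \<inter> U)) (mset_set ((\<lambda>U. g ` U) ` P))"
    using blocks_image[OF g] by (simp add: profile_def)
  also have "\<dots> = image_mset (\<lambda>U. card (g ` x \<inter> g ` U)) (mset_set P)"
    by (simp add: image_mset_mset_set[OF inj, symmetric] multiset.map_comp comp_def)
  also have "\<dots> = profile x"
    using group_inj[OF g] by (simp add: profile_def image_Int[symmetric] card_image inj_on_subset)
  finally show ?thesis .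
qed

lemma card_image_Int_block: "g \<in> G \<Longrightarrow> card (g ` x \<inter> g ` U) = card (x \<inter> U)"
  by (metis card_image group_inj image_Int inj_on_subset subset_UNIV)

lemma profile_values:
  assumes "profile x = profile y" "\<forall>U\<in>P. card (x \<inter> U) \<in> S" "U \<in> P"
  shows "card (y \<inter> U) \<in> S"
  using in_profile[of "card (y \<inter> U)" y] in_profile[of _ x] assms by auto

lemma block_unique_value:
  assumes "count (profile x) v = 1" "U \<in> P" "W \<in> P" "card (x \<inter> U) = v" "card (x \<inter> W) = v"
  shows "U = W"
proof -
  have "card {U \<in> P. card (x \<inter> U) = v} = 1" using assms(1) by (simp add: count_profile)
  then show ?thesis using assms(2-5) card_1_singletonE
    by (metis (mono_tags, lifting) mem_Collect_eq singletonD)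
qed

lemma unique_block_with_value:
  assumes "count (profile x) v = 1"
  obtains U0 where "U0 \<in> P" "card (x \<inter> U0) = v" "\<forall>U\<in>P. U \<noteq> U0 \<longrightarrow> card (x \<inter> U) \<noteq> v"
proof -
  obtain U0 where "U0 \<in> P" "card (x \<inter> U0) = v"
    using assms in_profile by (metis count_inI zero_neq_one)
  then show thesis using that block_unique_value[OF assms] by blast
qed

lemma profile_single_block:
  assumes "U0 \<in> P" "\<forall>U\<in>P. U \<noteq> U0 \<longrightarrow> card (x \<inter> U) = c"
  shows "profile x = add_mset (card (x \<inter> U0)) (replicate_mset (b - 1) c)"
proof -
  have "mset_set P = add_mset U0 (mset_set (P - {U0}))"
    using assms(1) finite_P by (simp add: mset_set.remove)
  moreover have "image_mset (\<lambda>U. card (x \<inter> U)) (mset_set (P - {U0}))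
      = image_mset (\<lambda>_. c) (mset_set (P - {U0}))"
    using assms finite_P by (intro image_mset_cong) auto
  then have "image_mset (\<lambda>U. card (x \<inter> U)) (mset_set (P - {U0})) = replicate_mset (b - 1) c"
    using assms(1) finite_P by (simp add: image_mset_const_eq b_def)
  ultimately show ?thesis by (simp add: profile_def)
qed

lemma profile_two_values:
  assumes "\<forall>U\<in>P. card (x \<inter> U) \<in> {u, v}" "u \<noteq> v"
  shows "profile x
    = replicate_mset (count (profile x) u) u + replicate_mset (count (profile x) v) v"
proof (rule mset_two_values[OF _ assms(2)])
  show "set_mset (profile x) \<subseteq> {u, v}" using assms(1) by (auto simp: in_profile)
qed

lemma card_exchange_Int_block:
  assumes "p \<in> x" "q \<notin> x" "U \<in> P"
  shows "card (exchange x p q \<inter> U)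
    = card (x \<inter> U) - (if p \<in> U then 1 else 0) + (if q \<in> U then 1 else 0)"
proof -
  have "finite (x \<inter> U)" using finite_block[OF assms(3)] by simp
  moreover have "exchange x p q \<inter> U = (if q \<in> U then insert q else id) ((x \<inter> U) - {p})"
    using assms by auto
  ultimately show ?thesis using assms by (auto simp: card_Diff_singleton_if)
qed

lemma card_exchange_Int_same_block:
  assumes "p \<in> x" "q \<notin> x" "p \<in> U" "q \<in> U" "U \<in> P" "W \<in> P"
  shows "card (exchange x p q \<inter> W) = card (x \<inter> W)"
proof -
  have "p \<in> W \<longleftrightarrow> q \<in> W" using assms block_unique by blast
  moreover have "0 < card (x \<inter> W)" if "p \<in> W"
    using assms that finite_block card_gt_0_iff by blast
  ultimately show ?thesis using card_exchange_Int_block[OF assms(1,2,6)] by auto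
qed

lemma profile_exchange:
  assumes "p \<in> x" "q \<notin> x" "p \<in> U" "q \<in> W" "U \<in> P" "W \<in> P" "U \<noteq> W"
  shows "profile (exchange x p q) + {#card (x \<inter> U), card (x \<inter> W)#}
       = profile x + {#card (x \<inter> U) - 1, card (x \<inter> W) + 1#}"
proof -
  let ?s = "\<lambda>y B. card (y \<inter> B)" and ?R = "P - {U, W}"
  have "P = insert U (insert W ?R)" using assms by auto
  then have "mset_set P = mset_set (insert U (insert W ?R))" by (rule arg_cong)
  also have "\<dots> = mset_set ?R + {#U, W#}" using assms finite_P by simp
  finally have split: "mset_set P = mset_set ?R + {#U, W#}" .
  have "p \<notin> W" "q \<notin> U" using assms block_unique by blast+
  then have "?s (exchange x p q) U = ?s x U - 1" "?s (exchange x p q) W = ?s x W + 1"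
    using card_exchange_Int_block[OF assms(1,2,5)] card_exchange_Int_block[OF assms(1,2,6)] assms
    by simp_all
  moreover have "exchange x p q \<inter> B = x \<inter> B" if "B \<in> ?R" for B
    using that assms block_unique by blast
  then have "image_mset (?s (exchange x p q)) (mset_set ?R) = image_mset (?s x) (mset_set ?R)"
    using finite_P by (intro image_mset_cong) simp
  ultimately show ?thesis by (simp add: profile_def split add_ac)
qed

end

section \<open>Neighbour-transitive codes with an invariant block system\<close>

locale imprimitive_code = block_system +
  fixes k :: nat and C :: "'a set set"
  assumes two_le_k: "2 \<le> k" and k_le: "k + 2 \<le> card V"
    and code: "is_code V k C"
    and stabilises: "stabilises_code G C"
    and neighbour_transitive: "neighbour_transitive V k G C"
    and P_ne_V: "P \<noteq> {V}" and P_ne_singletons: "P \<noteq> (\<lambda>x. {x}) ` V"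
begin

lemma P_nonempty: "P \<noteq> {}"
  using partition k_le by (auto simp: partition_on_def)

lemma two_le_a: "2 \<le> a"
proof (rule ccontr)
  assume "\<not> 2 \<le> a"
  moreover obtain U where "U \<in> P" using P_nonempty by blast
  then have "0 < a"
    using card_block finite_block partition_onD3[OF partition] by (metis card_gt_0_iff)
  ultimately have "a = 1" by linarith
  then have singleton: "\<exists>u. U = {u}" if "U \<in> P" for U
    using card_block[OF that] card_1_singletonE by metis
  have "P = (\<lambda>x. {x}) ` V"
  proof
    show "P \<subseteq> (\<lambda>x. {x}) ` V" using singleton block_subset by blast
    show "(\<lambda>x. {x}) ` V \<subseteq> P" using singleton point_in_block by force
  qed
  then show False using P_ne_singletons by simp
qed

lemma two_le_b: "2 \<le> b"
proof (rule ccontr)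
  assume "\<not> 2 \<le> b"
  moreover have "card P \<noteq> 0" using P_nonempty finite_P by simp
  ultimately have "card P = 1" unfolding b_def by linarith
  then obtain U where "P = {U}" by (rule card_1_singletonE)
  then show False using P_ne_V partition by (auto simp: partition_on_def)
qed

lemma code_ksubset: "x \<in> C \<Longrightarrow> x \<in> ksubsets V k"
  using code by (auto simp: is_code_def)

lemma finite_code: "x \<in> C \<Longrightarrow> finite x"
  using code_ksubset[of x] finite_V by (auto simp: ksubsets_def intro: finite_subset)

lemma code_image: "g \<in> G \<Longrightarrow> x \<in> C \<Longrightarrow> g ` x \<in> C"
  using stabilises by (auto simp: stabilises_code_def)

lemma profile_code: "x \<in> C \<Longrightarrow> y \<in> C \<Longrightarrow> profile x = profile y"
  using neighbour_transitive profile_image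
  by (metis neighbour_transitive_def transitive_on_sets_def)

lemma profile_neighbours:
  "x \<in> neighbours V k C \<Longrightarrow> y \<in> neighbours V k C \<Longrightarrow> profile x = profile y"
  using neighbour_transitive profile_image
  by (metis neighbour_transitive_def transitive_on_sets_def)

lemma exchange_ksubset:
  assumes "x \<in> ksubsets V k" "p \<in> x" "q \<in> V" "q \<notin> x"
  shows "exchange x p q \<in> ksubsets V k" "johnson_adj k x (exchange x p q)"
proof -
  have "finite x" using assms finite_V finite_subset by (auto simp: ksubsets_def)
  moreover have "x \<inter> exchange x p q = x - {p}" using assms by auto
  ultimately show "exchange x p q \<in> ksubsets V k" "johnson_adj k x (exchange x p q)"
    using assms two_le_k by (auto simp: ksubsets_def johnson_adj_def card_Diff_singleton)
qed

lemma exchange_neighbour: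
  assumes "x \<in> C" "p \<in> x" "q \<in> V" "q \<notin> x" "exchange x p q \<notin> C"
  shows "exchange x p q \<in> neighbours V k C"
  using exchange_ksubset[OF code_ksubset] assms unfolding neighbours_def by blast

definition partial :: "'a set \<Rightarrow> bool" where
  "partial x \<longleftrightarrow> (\<exists>U\<in>P. 0 < card (x \<inter> U) \<and> card (x \<inter> U) < a)"

lemma partial_iff_profile: "partial x \<longleftrightarrow> (\<exists>v\<in>#profile x. 0 < v \<and> v < a)"
proof
  assume "partial x"
  then obtain U where "U \<in> P" "0 < card (x \<inter> U)" "card (x \<inter> U) < a" by (auto simp: partial_def)
  then show "\<exists>v\<in>#profile x. 0 < v \<and> v < a" using in_profile by blast
qed (auto simp: partial_def in_profile)

lemma code_partial: "x \<in> C \<Longrightarrow> y \<in> C \<Longrightarrow> partial x \<Longrightarrow> partial y"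
  using partial_iff_profile profile_code by metis

lemma full_block_values:
  assumes "\<not> partial x" "U \<in> P"
  shows "card (x \<inter> U) \<in> {0, a}"
  using assms card_Int_block_le[OF assms(2), of x] by (auto simp: partial_def)

lemma Union_full_blocks:
  assumes "x \<subseteq> V" "\<not> partial x"
  shows "x = \<Union>{U \<in> P. U \<subseteq> x}"
proof
  show "x \<subseteq> \<Union>{U \<in> P. U \<subseteq> x}"
  proof
    fix p assume "p \<in> x"
    then obtain U where U: "U \<in> P" "p \<in> U" using point_in_block assms(1) by blast
    then have "x \<inter> U \<noteq> {}" using \<open>p \<in> x\<close> by blast
    then have "card (x \<inter> U) \<noteq> 0" using finite_block[OF U(1)] by simp
    then have "U \<subseteq> x" using full_block_values[OF assms(2) U(1)] block_subset_iff_card[OF U(1)]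
      by simp
    then show "p \<in> \<Union>{U \<in> P. U \<subseteq> x}" using U by blast
  qed
qed blast

lemma changing_move_exists:
  assumes "x \<in> ksubsets V k" "partial x"
  shows "\<exists>U W. changing_move P a (\<lambda>U. card (x \<inter> U)) U W"
proof (rule ccontr)
  assume "\<not> ?thesis"
  moreover obtain i where "i \<in> P" "0 < card (x \<inter> i)" "card (x \<inter> i) < a"
    using assms(2) by (auto simp: partial_def)
  ultimately have "(\<Sum>U\<in>P. card (x \<inter> U)) = 1 \<or> (\<Sum>U\<in>P. card (x \<inter> U)) + 1 = a * card P"
    using no_changing_move[of P a "\<lambda>U. card (x \<inter> U)" i] finite_P two_le_a two_le_b
      card_Int_block_le by (auto simp: b_def)
  moreover have "(\<Sum>U\<in>P. card (x \<inter> U)) = k"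
    using card_eq_sum_blocks assms(1) by (auto simp: ksubsets_def)
  ultimately show False using two_le_k k_le card_V by (auto simp: b_def)
qed

lemma changing_move_points:
  assumes "changing_move P a (\<lambda>U. card (x \<inter> U)) U W"
  obtains p q where "p \<in> x" "p \<in> U" "q \<in> W" "q \<notin> x"
proof -
  have "x \<inter> U \<noteq> {}" using assms by (auto simp: changing_move_def)
  moreover have "\<not> W \<subseteq> x"
    using assms block_subset_iff_card by (auto simp: changing_move_def)
  ultimately show thesis using that by blast
qed

lemma profile_exchange_changing:
  assumes "changing_move P a (\<lambda>U. card (x \<inter> U)) U W" "p \<in> x" "p \<in> U" "q \<in> W" "q \<notin> x"
  shows "profile (exchange x p q) \<noteq> profile x"
proof
  let ?u = "card (x \<inter> U)" and ?w = "card (x \<inter> W)"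
  assume "profile (exchange x p q) = profile x"
  then have "profile x + {#?u, ?w#} = profile x + {#?u - 1, ?w + 1#}"
    using profile_exchange[of p x q U W] assms by (simp add: changing_move_def)
  then have "{#?u, ?w#} = {#?u - 1, ?w + 1#}" by (rule add_left_imp_eq)
  then show False using assms by (auto simp: changing_move_def add_eq_conv_diff)
qed

lemma profile_exchange_eq:
  assumes "p \<in> x" "q \<notin> x" "p \<in> U" "q \<in> W" "U \<in> P" "W \<in> P"
    and "card (x \<inter> U) = card (x \<inter> W) + 1"
  shows "profile (exchange x p q) = profile x"
proof -
  have "U \<noteq> W" using assms(7) by auto
  then show ?thesis using profile_exchange[OF assms(1-6)] assms(7) by (simp add: add_mset_commute)
qed

lemma profile_exchange_same_block:
  assumes "p \<in> x" "q \<notin> x" "p \<in> U" "q \<in> U" "U \<in> P"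
  shows "profile (exchange x p q) = profile x"
  unfolding profile_def using card_exchange_Int_same_block[OF assms] finite_P
  by (intro image_mset_cong) simp

lemma changing_exchange_neighbour:
  assumes "x \<in> C" "changing_move P a (\<lambda>U. card (x \<inter> U)) U W"
    and "p \<in> x" "p \<in> U" "q \<in> W" "q \<notin> x"
  shows "exchange x p q \<in> neighbours V k C"
proof (rule exchange_neighbour)
  show "q \<in> V" using assms block_subset by (auto simp: changing_move_def)
  show "exchange x p q \<notin> C"
    using profile_exchange_changing[OF assms(2-6)] profile_code assms(1) by blast
qed (use assms in auto)

lemma same_profile_neighbour_in_code:
  assumes "x \<in> C" "partial x" "y \<in> ksubsets V k" "johnson_adj k x y" "profile y = profile x"
  shows "y \<in> C"
proof (rule ccontr)
  assume "y \<notin> C"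
  then have y: "y \<in> neighbours V k C" using assms unfolding neighbours_def by blast
  obtain U W where move: "changing_move P a (\<lambda>U. card (x \<inter> U)) U W"
    using changing_move_exists code_ksubset assms by blast
  then obtain p q where pq: "p \<in> x" "p \<in> U" "q \<in> W" "q \<notin> x" by (rule changing_move_points)
  have "profile (exchange x p q) = profile y"
    using changing_exchange_neighbour[OF assms(1) move pq] y profile_neighbours by blast
  then show False using profile_exchange_changing[OF move pq] assms(5) by simp
qed

lemma exchange_in_code:
  assumes "x \<in> C" "partial x" "p \<in> x" "q \<in> V" "q \<notin> x"
    and "profile (exchange x p q) = profile x"
  shows "exchange x p q \<in> C"
  using same_profile_neighbour_in_code[OF assms(1,2)] exchange_ksubset[OF code_ksubset] assms
    by blast

lemma changing_moves_unique:
  assumes "x \<in> C" "partial x"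
  shows "unique_changing_move P a (\<lambda>U. card (x \<inter> U))"
proof
  show "2 \<le> a" by (rule two_le_a)
  show "U \<in> P \<Longrightarrow> card (x \<inter> U) \<le> a" for U by (rule card_Int_block_le)
  fix U W U' W'
  let ?s = "\<lambda>U. card (x \<inter> U)"
  assume move: "changing_move P a ?s U W" and move': "changing_move P a ?s U' W'"
  obtain p q where pq: "p \<in> x" "p \<in> U" "q \<in> W" "q \<notin> x"
    using move by (rule changing_move_points)
  obtain p' q' where pq': "p' \<in> x" "p' \<in> U'" "q' \<in> W'" "q' \<notin> x"
    using move' by (rule changing_move_points)
  have same: "profile (exchange x p q) = profile (exchange x p' q')"
    using changing_exchange_neighbour[OF assms(1) move pq]
      changing_exchange_neighbour[OF assms(1) move' pq']
      profile_neighbours by blast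
  have UW: "U \<in> P" "W \<in> P" "U \<noteq> W" and UW': "U' \<in> P" "W' \<in> P" "U' \<noteq> W'"
    using move move' by (simp_all add: changing_move_def)
  note e = profile_exchange[OF pq(1,4,2,3) UW]
  note e' = profile_exchange[OF pq'(1,4,2,3) UW', folded same]
  have "profile x + {#?s U - 1, ?s W + 1#} + {#?s U', ?s W'#}
      = profile (exchange x p q) + {#?s U, ?s W#} + {#?s U', ?s W'#}" by (simp only: e)
  also have "\<dots> = profile (exchange x p q) + {#?s U', ?s W'#} + {#?s U, ?s W#}"
    by (simp only: ac_simps)
  also have "\<dots> = profile x + {#?s U' - 1, ?s W' + 1#} + {#?s U, ?s W#}" by (simp only: e')
  finally have "{#?s U - 1, ?s W + 1#} + {#?s U', ?s W'#}
      = {#?s U' - 1, ?s W' + 1#} + {#?s U, ?s W#}"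
    by (simp only: add.assoc add_left_cancel)
  then show "?s U = ?s U' \<and> ?s W = ?s W'"
    by (rule exchanged_values_unique) (use move move' in \<open>auto simp: changing_move_def\<close>)
qed

section \<open>Every subset of the codeword type is a codeword\<close>

definition profile_class :: "'a set \<Rightarrow> 'a set set" where
  "profile_class x = {y \<in> ksubsets V k. profile y = profile x}"

lemma code_subset_profile_class: "x \<in> C \<Longrightarrow> C \<subseteq> profile_class x"
  unfolding profile_class_def using code_ksubset profile_code by blast

lemma ksubsets_diff_nonempty:
  assumes "x \<in> ksubsets V k" "y \<in> ksubsets V k" "x \<noteq> y"
  shows "\<exists>p. p \<in> x \<and> p \<notin> y"
proof (rule ccontr)
  assume "\<not> ?thesis"
  then have "x \<subseteq> y" by blast
  moreover have "finite y" "card x = card y"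
    using assms(1,2) finite_V by (auto simp: ksubsets_def intro: finite_subset)
  ultimately show False using card_subset_eq assms(3) by blast
qed

definition differ_in_block :: "'a set \<Rightarrow> 'a set \<Rightarrow> bool" where
  "differ_in_block x y \<longleftrightarrow> (\<exists>U\<in>P. \<exists>p q. p \<in> U \<and> q \<in> U \<and> p \<in> x \<and> p \<notin> y \<and> q \<in> y \<and> q \<notin> x)"

lemma differ_in_block_sym: "differ_in_block x y \<longleftrightarrow> differ_in_block y x"
  by (auto simp: differ_in_block_def)

lemma card_Int_block_less:
  assumes "\<not> differ_in_block x y" "U \<in> P" "p \<in> U" "p \<in> x" "p \<notin> y"
  shows "card (y \<inter> U) < card (x \<inter> U)"
proof -
  have "y \<inter> U \<subset> x \<inter> U" using assms by (auto simp: differ_in_block_def)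
  then show ?thesis using finite_block[OF assms(2)] by (meson finite_Int psubset_card_mono)
qed

lemma descent_step_in_block:
  assumes "x \<in> C" "partial x" "y \<subseteq> V" "differ_in_block x y"
  shows "\<exists>x'\<in>C. (\<forall>U\<in>P. card (x' \<inter> U) = card (x \<inter> U)) \<and> card (x' - y) < card (x - y)"
proof -
  obtain U p q where U: "U \<in> P" "p \<in> U" "q \<in> U" "p \<in> x" "p \<notin> y" "q \<in> y" "q \<notin> x"
    using assms(4) by (auto simp: differ_in_block_def)
  have "q \<in> V" using U block_subset by blast
  then have "exchange x p q \<in> C"
    using exchange_in_code[OF assms(1,2) U(4)] profile_exchange_same_block[OF U(4,7,2,3,1)] U(7)
      by blast
  moreover have "\<forall>W\<in>P. card (exchange x p q \<inter> W) = card (x \<inter> W)"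
    using card_exchange_Int_same_block U by blast
  moreover have "card (exchange x p q - y) < card (x - y)"
    using card_exchange_diff_less[OF finite_code[OF assms(1)] U(4,5,6)] .
  ultimately show ?thesis by blast
qed

lemma descent_step_across_blocks:
  assumes "x \<in> C" "partial x" "y \<subseteq> V" "U \<in> P" "W \<in> P"
    and "card (y \<inter> U) < card (x \<inter> U)" "card (x \<inter> W) < card (y \<inter> W)"
    and "card (x \<inter> U) = card (x \<inter> W) + 1"
  shows "\<exists>x'\<in>C. card (x' - y) < card (x - y)"
proof -
  have "\<not> x \<inter> U \<subseteq> y \<inter> U" "\<not> y \<inter> W \<subseteq> x \<inter> W"
    using assms(6,7) finite_block[OF assms(4)] finite_block[OF assms(5)] card_mono
    by (meson finite_Int not_le)+
  then obtain p q where p: "p \<in> x" "p \<in> U" "p \<notin> y" and q: "q \<in> y" "q \<in> W" "q \<notin> x"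
    by blast
  have "exchange x p q \<in> C"
    using exchange_in_code[OF assms(1,2) p(1) _ q(3)]
      profile_exchange_eq[OF p(1) q(3) p(2) q(2) assms(4,5,8)]
      q(1) assms(3) by blast
  moreover have "card (exchange x p q - y) < card (x - y)"
    using card_exchange_diff_less[OF finite_code[OF assms(1)] p(1,3) q(1)] .
  ultimately show ?thesis by blast
qed

lemma same_intersections_in_code:
  assumes "x \<in> C" "y \<in> ksubsets V k" "\<forall>U\<in>P. card (y \<inter> U) = card (x \<inter> U)"
  shows "y \<in> C"
proof (cases "partial x")
  case True
  let ?Q = "\<lambda>z. \<forall>U\<in>P. card (z \<inter> U) = card (x \<inter> U)"
  show ?thesis
  proof (rule descent_reaches[of x C ?Q])
    fix z assume z: "z \<in> C" "?Q z" "z \<noteq> y"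
    have "differ_in_block z y"
    proof (rule ccontr)
      assume "\<not> differ_in_block z y"
      moreover obtain p where "p \<in> z" "p \<notin> y"
        using ksubsets_diff_nonempty code_ksubset z assms(2) by blast
      moreover obtain U where "U \<in> P" "p \<in> U"
        using point_in_block code_ksubset[OF z(1)] \<open>p \<in> z\<close> by (auto simp: ksubsets_def)
      ultimately show False using card_Int_block_less assms(3) z(2) by fastforce
    qed
    then show "\<exists>z'\<in>C. ?Q z' \<and> card (z' - y) < card (z - y)"
      using descent_step_in_block[OF z(1) code_partial[OF assms(1) z(1) True]] z(2) assms(2)
      by (auto simp: ksubsets_def)
  qed (use assms in auto)
next
  case False
  then have "\<not> partial y" using assms(3) by (simp add: partial_def)
  moreover have "U \<subseteq> x \<longleftrightarrow> U \<subseteq> y" if "U \<in> P" for U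
    using assms(3) block_subset_iff_card[OF that] that by simp
  then have "{U \<in> P. U \<subseteq> x} = {U \<in> P. U \<subseteq> y}" by blast
  ultimately have "x = y"
    using Union_full_blocks[of x] Union_full_blocks[of y] False code_ksubset[OF assms(1)] assms(2)
    by (simp add: ksubsets_def)
  then show ?thesis using assms(1) by simp
qed

lemma profile_class_in_code_single_block:
  assumes "x0 \<in> C" "U0 \<in> P" and others: "\<forall>U\<in>P. U \<noteq> U0 \<longrightarrow> card (x0 \<inter> U) = c"
    and "card (x0 \<inter> U0) \<noteq> c"
  shows "profile_class x0 \<subseteq> C"
proof
  fix y assume "y \<in> profile_class x0"
  then have y: "y \<in> ksubsets V k" "profile y = profile x0" by (auto simp: profile_class_def)
  let ?d = "card (x0 \<inter> U0)"
  have "{U \<in> P. card (x0 \<inter> U) = ?d} = {U0}" using assms by auto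
  then have "count (profile y) ?d = 1" using y by (simp add: count_profile)
  then obtain U' where U': "U' \<in> P" "card (y \<inter> U') = ?d"
    and unique: "\<forall>U\<in>P. U \<noteq> U' \<longrightarrow> card (y \<inter> U) \<noteq> ?d"
    by (rule unique_block_with_value)
  have x0_values: "\<forall>U\<in>P. card (x0 \<inter> U) \<in> {?d, c}" using others by auto
  have y_others: "card (y \<inter> U) = c" if "U \<in> P" "U \<noteq> U'" for U
    using profile_values[OF y(2)[symmetric] x0_values that(1)] unique that by auto
  from blocks_transitive[OF assms(2) U'(1)] obtain g where g: "g \<in> G" "g ` U0 = U'" ..
  have "card (y \<inter> U) = card (g ` x0 \<inter> U)" if "U \<in> P" for U
  proof -
    have "U \<in> (\<lambda>U. g ` U) ` P" using blocks_image[OF g(1)] that by simp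
    then obtain W where W: "W \<in> P" "U = g ` W" by blast
    have image: "card (g ` x0 \<inter> U) = card (x0 \<inter> W)" using card_image_Int_block g W by simp
    have "W = U0 \<longleftrightarrow> U = U'" using W(2) g inj_image_eq_iff[OF group_inj[OF g(1)]] by metis
    then show ?thesis
      using image y_others[OF that] U'(2) others W(1) by (cases "W = U0") simp_all
  qed
  then show "y \<in> C" using same_intersections_in_code code_image g(1) assms(1) y(1) by blast
qed

lemma profile_class_in_code_two_values:
  assumes "x0 \<in> C" "partial x0" and two_values: "\<forall>U\<in>P. card (x0 \<inter> U) \<in> {w, w + 1}"
  shows "profile_class x0 \<subseteq> C"
proof
  fix y assume "y \<in> profile_class x0"
  then have y: "y \<in> ksubsets V k" "y \<subseteq> V" "profile y = profile x0"
    by (auto simp: profile_class_def ksubsets_def)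
  show "y \<in> C"
  proof (rule descent_reaches[of x0 C "\<lambda>_. True"])
    fix x assume x: "x \<in> C" "x \<noteq> y"
    have partial: "partial x" using code_partial assms x by blast
    show "\<exists>x'\<in>C. True \<and> card (x' - y) < card (x - y)"
    proof (cases "differ_in_block x y")
      case True
      then show ?thesis using descent_step_in_block[OF x(1) partial y(2)] by blast
    next
      case False
      obtain p q where p: "p \<in> x" "p \<notin> y" and q: "q \<in> y" "q \<notin> x"
        using ksubsets_diff_nonempty code_ksubset x y(1) by metis
      have "p \<in> V" "q \<in> V" using code_ksubset[OF x(1)] p q y(2) by (auto simp: ksubsets_def)
      then obtain U W where U: "U \<in> P" "p \<in> U" and W: "W \<in> P" "q \<in> W"
        using point_in_block by meson
      have less: "card (y \<inter> U) < card (x \<inter> U)" "card (x \<inter> W) < card (y \<inter> W)"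
        using card_Int_block_less False differ_in_block_sym U W p q by blast+
      have "card (x \<inter> B) \<in> {w, w + 1}" "card (y \<inter> B) \<in> {w, w + 1}" if "B \<in> P" for B
        using profile_values two_values that profile_code[OF assms(1) x(1)] y(3) by metis+
      then have "card (x \<inter> U) = w + 1" "card (x \<inter> W) = w"
        using less U(1) W(1) by fastforce+
      then have "card (x \<inter> U) = card (x \<inter> W) + 1" by simp
      then show ?thesis using descent_step_across_blocks[OF x(1) partial y(2) U(1) W(1) less]
        by blast
    qed
  qed (use assms in auto)
qed

lemma descent_step_from_singleton_block:
  assumes x: "x \<in> C" "partial x" and "a = 2" and y: "y \<in> ksubsets V k"
    and unique: "count (profile x) 1 = 1"
    and m: "m \<in> P" "card (x \<inter> m) = 1" "card (y \<inter> m) = 0"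
  shows "\<exists>x'\<in>C. card (x' - y) < card (x - y)"
proof (cases "differ_in_block x y")
  case True
  moreover have "y \<subseteq> V" using y by (simp add: ksubsets_def)
  ultimately show ?thesis using descent_step_in_block[OF x] by blast
next
  case False
  have "x \<noteq> y" using m by auto
  then obtain q where q: "q \<in> y" "q \<notin> x"
    using ksubsets_diff_nonempty[OF y code_ksubset[OF x(1)]] by metis
  then obtain W where W: "W \<in> P" "q \<in> W"
    using point_in_block y by (auto simp: ksubsets_def)
  have less: "card (x \<inter> W) < card (y \<inter> W)"
    using card_Int_block_less False differ_in_block_sym W q by blast
  then have "W \<noteq> m" using m by auto
  then have "card (x \<inter> W) \<noteq> 1" using block_unique_value[OF unique W(1) m(1) _ m(2)] by blast
  moreover have "card (y \<inter> W) \<le> 2" using card_Int_block_le[OF W(1)] \<open>a = 2\<close> by simp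
  ultimately have "card (x \<inter> W) = 0" using less by linarith
  then show ?thesis
    using descent_step_across_blocks[OF x _ m(1) W(1)] less m y by (simp add: ksubsets_def)
qed

lemma descent_step_shared_singleton_block:
  assumes x: "x \<in> C" "partial x" and a: "a = 2" and y: "y \<in> ksubsets V k"
    and unique: "count (profile x) 1 = 1" "count (profile y) 1 = 1"
    and m: "m \<in> P" "card (x \<inter> m) = 1" "card (y \<inter> m) = 1"
    and U: "U \<in> P" "p \<in> U" "p \<in> x" "p \<notin> y" "card (y \<inter> U) < card (x \<inter> U)"
  shows "\<exists>x'\<in>C. card (x' - y) < card (x - y)"
proof -
  have "U \<noteq> m" using U(5) m by auto
  then have "card (x \<inter> U) \<noteq> 1" "card (y \<inter> U) \<noteq> 1"
    using block_unique_value[OF unique(1) U(1) m(1) _ m(2)]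
      block_unique_value[OF unique(2) U(1) m(1) _ m(3)]
    by blast+
  moreover have "card (x \<inter> U) \<le> 2" using card_Int_block_le[OF U(1)] a by simp
  ultimately have xU: "card (x \<inter> U) = 2" and yU: "card (y \<inter> U) = 0" using U(5) by linarith+
  have "\<not> m \<subseteq> x" using m a block_subset_iff_card by simp
  then obtain r where r: "r \<in> m" "r \<notin> x" by blast
  let ?x1 = "exchange x p r"
  have x1: "?x1 \<in> C" "profile ?x1 = profile x"
    using exchange_in_code[OF x U(3) _ r(2)] profile_exchange_eq[OF U(3) r(2) U(2) r(1) U(1) m(1)]
      xU m r(1) block_subset by auto
  show ?thesis
  proof (cases "r \<in> y")
    case True
    then show ?thesis using x1(1) card_exchange_diff_less[OF finite_code[OF x(1)] U(3,4) True]
      by blast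
  next
    case False
    then have "card (?x1 - y) = card (x - y)"
      using card_exchange_diff_eq[OF finite_code[OF x(1)] U(3,4) r(2)] by blast
    moreover have "r \<notin> U" using block_unique[OF U(1) m(1) _ r(1)] \<open>U \<noteq> m\<close> by blast
    then have "card (?x1 \<inter> U) = 1" using card_exchange_Int_block[OF U(3) r(2) U(1)] xU U(2) by simp
    ultimately show ?thesis
      using descent_step_from_singleton_block[OF x1(1) _ a y _ U(1) _ yU] x1 x unique
        partial_iff_profile by auto
  qed
qed

lemma descent_step_singleton_profile:
  assumes x: "x \<in> C" "partial x" and a: "a = 2" and y: "y \<in> ksubsets V k" "x \<noteq> y"
    and same: "profile y = profile x" and unique: "count (profile x) 1 = 1"
  shows "\<exists>x'\<in>C. card (x' - y) < card (x - y)"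
proof (cases "differ_in_block x y")
  case True
  moreover have "y \<subseteq> V" using y by (simp add: ksubsets_def)
  ultimately show ?thesis using descent_step_in_block[OF x] by blast
next
  case False
  obtain m where m: "m \<in> P" "card (x \<inter> m) = 1" using unique by (rule unique_block_with_value)
  obtain p where p: "p \<in> x" "p \<notin> y"
    using ksubsets_diff_nonempty[OF code_ksubset[OF x(1)] y] by metis
  then obtain U where U: "U \<in> P" "p \<in> U"
    using point_in_block code_ksubset[OF x(1)] by (auto simp: ksubsets_def)
  have less: "card (y \<inter> U) < card (x \<inter> U)" using card_Int_block_less False U p by blast
  have "card (y \<inter> m) \<le> 2" using card_Int_block_le[OF m(1)] a by simp
  then consider "card (y \<inter> m) = 0" | "card (y \<inter> m) = 2" | "card (y \<inter> m) = 1" by linarith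
  then show ?thesis
  proof cases
    case 1
    then show ?thesis using descent_step_from_singleton_block[OF x a y(1) unique m] by blast
  next
    case 2
    then have "U \<noteq> m" using less m by auto
    then have "card (x \<inter> U) \<noteq> 1" using block_unique_value[OF unique U(1) m(1) _ m(2)] by blast
    moreover have "card (x \<inter> U) \<le> 2" using card_Int_block_le[OF U(1)] a by simp
    ultimately have "card (x \<inter> U) = card (x \<inter> m) + 1" using less m by linarith
    then show ?thesis
      using descent_step_across_blocks[OF x _ U(1) m(1) less] m 2 y by (simp add: ksubsets_def)
  next
    case 3
    then show ?thesis
      using descent_step_shared_singleton_block[OF x a y(1) unique _ m 3 U p less] same unique
        by simp
  qed
qed

lemma profile_class_in_code_singleton_value:
  assumes "x0 \<in> C" "partial x0" "a = 2" "count (profile x0) 1 = 1"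
  shows "profile_class x0 \<subseteq> C"
proof
  fix y assume "y \<in> profile_class x0"
  then have y: "y \<in> ksubsets V k" "profile y = profile x0" by (auto simp: profile_class_def)
  show "y \<in> C"
  proof (rule descent_reaches[of x0 C "\<lambda>_. True"])
    fix x assume x: "x \<in> C" "x \<noteq> y"
    then have "partial x" "profile x = profile x0"
      using code_partial profile_code assms(1,2) by blast+
    then show "\<exists>x'\<in>C. True \<and> card (x' - y) < card (x - y)"
      using descent_step_singleton_profile[OF x(1) _ assms(3) y(1) x(2)] y(2) assms(4) by simp
  qed (use assms in auto)
qed

section \<open>The possible types\<close>

lemma code_eq_type_code:
  assumes "x0 \<in> C" "profile_class x0 \<subseteq> C" "filter_mset (\<lambda>i. i \<noteq> 0) (profile x0) = nz t"
  shows "C = type_code V k P t"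
proof -
  have "profile y = profile x0 \<longleftrightarrow> utype P y = nz t" for y
    using mset_eq_if_nonzero_part_eq[of "profile y" "profile x0"] assms(3) size_profile
    by (auto simp: utype_eq_profile)
  then have "type_code V k P t = profile_class x0" by (auto simp: type_code_def profile_class_def)
  then show ?thesis using code_subset_profile_class assms by blast
qed

lemma code_type_single_block:
  assumes "x0 \<in> C" "U0 \<in> P" "\<forall>U\<in>P. U \<noteq> U0 \<longrightarrow> card (x0 \<inter> U) = 0" "card (x0 \<inter> U0) \<noteq> 0"
  shows "k \<le> a \<and> C = type_code V k P {#k#}"
proof -
  have profile: "profile x0 = add_mset (card (x0 \<inter> U0)) (replicate_mset (b - 1) 0)"
    using profile_single_block assms(2,3) by blast
  have "card (x0 \<inter> U0) = k"
    using sum_profile[of x0] profile code_ksubset[OF assms(1)] by (simp add: ksubsets_def)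
  moreover have "C = type_code V k P {#k#}"
    using code_eq_type_code[OF assms(1) profile_class_in_code_single_block[OF assms]] profile
      calculation assms(4) by (simp add: nz_def)
  ultimately show ?thesis using card_Int_block_le[OF assms(2), of x0] by simp
qed

lemma code_type_single_nonfull_block:
  assumes "x0 \<in> C" "U0 \<in> P" "\<forall>U\<in>P. U \<noteq> U0 \<longrightarrow> card (x0 \<inter> U) = a" "card (x0 \<inter> U0) \<noteq> a"
  shows "card V \<le> k + a \<and> C = type_code V k P ({#k + a - card V#} + replicate_mset (b - 1) a)"
proof -
  let ?d = "card (x0 \<inter> U0)"
  have profile: "profile x0 = add_mset ?d (replicate_mset (b - 1) a)"
    using profile_single_block assms(2,3) by blast
  have "k = ?d + (b - 1) * a"
    using sum_profile[of x0] profile code_ksubset[OF assms(1)] by (simp add: ksubsets_def)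
  moreover have "card V = a + (b - 1) * a" using card_V two_le_b by (cases b) auto
  ultimately have "?d = k + a - card V" "card V \<le> k + a" by auto
  moreover have "C = type_code V k P ({#?d#} + replicate_mset (b - 1) a)"
    using code_eq_type_code[OF assms(1) profile_class_in_code_single_block[OF assms]] profile
    by (simp add: nz_def)
  ultimately show ?thesis by simp
qed

lemma code_type_two_values:
  assumes "x0 \<in> C" "partial x0" "\<forall>U\<in>P. card (x0 \<inter> U) \<in> {w, w + 1}"
  defines "n \<equiv> count (profile x0) w" and "m \<equiv> count (profile x0) (w + 1)"
  shows "b = n + m" "k = n * w + m * (w + 1)"
    "C = type_code V k P (replicate_mset n w + replicate_mset m (w + 1))"
proof -
  have profile: "profile x0 = replicate_mset n w + replicate_mset m (w + 1)"
    using profile_two_values[OF assms(3)] by (simp add: n_def m_def)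
  show "b = n + m" using size_profile[of x0] profile by simp
  show "k = n * w + m * (w + 1)"
    using sum_profile[of x0] profile code_ksubset[OF assms(1)] by (simp add: ksubsets_def)
  show "C = type_code V k P (replicate_mset n w + replicate_mset m (w + 1))"
    using code_eq_type_code[OF assms(1) profile_class_in_code_two_values[OF assms(1-3)]] profile
    by (simp add: nz_def)
qed

lemma code_type_spread:
  assumes "x0 \<in> C" "partial x0" "\<forall>U\<in>P. card (x0 \<inter> U) \<le> 1"
  shows "k \<le> b \<and> C = type_code V k P (replicate_mset k 1)"
proof -
  have "\<forall>U\<in>P. card (x0 \<inter> U) \<in> {0, 0 + 1}" using assms(3) by (auto simp: le_Suc_eq)
  from code_type_two_values[OF assms(1,2) this] show ?thesis by (simp add: type_code_add_zeros)
qed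

lemma code_type_cospread:
  assumes "x0 \<in> C" "partial x0" "\<forall>U\<in>P. a - 1 \<le> card (x0 \<inter> U)"
  shows "card V \<le> k + b \<and>
    C = type_code V k P (replicate_mset (card V - k) (a - 1) + replicate_mset (b + k - card V) a)"
proof -
  have a: "a - 1 + 1 = a" using two_le_a by simp
  have "\<forall>U\<in>P. card (x0 \<inter> U) \<in> {a - 1, a - 1 + 1}"
    using assms(3) card_Int_block_le[of _ x0] a
      by (metis insert_iff le_antisym not_less_eq_eq Suc_eq_plus1)
  note two = code_type_two_values[OF assms(1,2) this, unfolded a]
  define n where "n = count (profile x0) (a - 1)"
  define m where "m = count (profile x0) a"
  note two = two[folded n_def m_def]
  have "n * (a - 1) + n = n * a" using a by (metis add_mult_distrib2 nat_mult_1_right)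
  then have "card V = k + n" using two(1,2) card_V by (simp add: algebra_simps)
  then have "card V - k = n" "b + k - card V = m" using two(1) by auto
  then show ?thesis using two(1,3) \<open>card V = k + n\<close> by simp
qed

lemma code_type_uniform:
  assumes "x0 \<in> C" "partial x0" "\<forall>U\<in>P. card (x0 \<inter> U) = c" "c \<noteq> 1"
  shows "\<exists>c. k = c * b \<and> 1 < c \<and> c \<le> a - 1 \<and> C = type_code V k P (replicate_mset b c)"
proof -
  have "\<forall>U\<in>P. card (x0 \<inter> U) \<in> {c, c + 1}" using assms(3) by simp
  note two = code_type_two_values[OF assms(1,2) this]
  have "count (profile x0) (c + 1) = 0" using assms(3) in_profile[of "c + 1" x0]
    by (simp add: not_in_iff)
  then have "b = count (profile x0) c" "k = c * b" "C = type_code V k P (replicate_mset b c)"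
    using two by simp_all
  moreover have "0 < c" "c < a" using assms(2,3) by (auto simp: partial_def)
  ultimately show ?thesis using assms(4) by (intro exI[of _ c]) auto
qed

lemma code_type_two_blocks:
  assumes "x0 \<in> C" "partial x0" "P = {l, h}" "l \<noteq> h"
    and "card (x0 \<inter> l) = w" "card (x0 \<inter> h) = w + 1" "0 < w" "w + 1 < a"
  shows "odd k \<and> 3 \<le> a \<and> b = 2 \<and> C = type_code V k P {#(k - 1) div 2, (k + 1) div 2#}"
proof -
  have "\<forall>U\<in>P. card (x0 \<inter> U) \<in> {w, w + 1}" using assms(3,5,6) by auto
  note two = code_type_two_values[OF assms(1,2) this]
  have profile: "profile x0 = {#w, w + 1#}" unfolding profile_def using assms(3-6) by simp
  then have "k = 2 * w + 1" "C = type_code V k P {#w, w + 1#}"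
    using two(2,3) by (simp_all add: add_mset_commute)
  moreover have "b = 2" unfolding b_def using assms(3,4) by simp
  ultimately show ?thesis using assms(7,8) by simp
qed

lemma code_type_pairs:
  assumes "x0 \<in> C" "partial x0" "a = 2" "U0 \<in> P" "card (x0 \<inter> U0) = 1"
    and others: "\<forall>U\<in>P. U \<noteq> U0 \<longrightarrow> card (x0 \<inter> U) \<noteq> 1"
  shows "odd k \<and> 3 \<le> b \<and> C = type_code V k P ({#1#} + replicate_mset ((k - 1) div 2) 2)"
proof -
  let ?nonzero = "filter_mset (\<lambda>i. i \<noteq> 0) (profile x0)"
  have "{U \<in> P. card (x0 \<inter> U) = 1} = {U0}" using assms(4-6) by auto
  then have unique: "count (profile x0) 1 = 1" by (simp add: count_profile)
  have "v \<in> {1, 2}" if "v \<in># ?nonzero" for v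
  proof -
    have "v \<in># profile x0" "v \<noteq> 0" using that by auto
    moreover from this(1) obtain U where "U \<in> P" "card (x0 \<inter> U) = v" using in_profile by blast
    ultimately show ?thesis using card_Int_block_le[of U x0] assms(3) by auto
  qed
  then have "set_mset ?nonzero \<subseteq> {1, 2}" by blast
  then have nonzero: "?nonzero = {#1#} + replicate_mset (count (profile x0) 2) 2"
    using mset_two_values[of ?nonzero 1 2] unique by simp
  then have k: "k = 1 + 2 * count (profile x0) 2"
    using sum_mset_filter_nonzero[of "profile x0"] sum_profile[of x0] code_ksubset[OF assms(1)]
    by (simp add: ksubsets_def)
  have "1 + count (profile x0) 2 \<le> b"
    using size_profile[of x0] nonzero size_filter_mset_lesseq[of _ "profile x0"]
      by (metis size_replicate_mset size_union size_single)
  moreover have "card V = 2 * b" using card_V assms(3) by simp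
  ultimately have "3 \<le> b" using k two_le_k k_le by presburger
  moreover have "C = type_code V k P ({#1#} + replicate_mset ((k - 1) div 2) 2)"
    using code_eq_type_code[OF assms(1) profile_class_in_code_singleton_value[OF assms(1-3) unique]]
      nonzero k by (simp add: nz_def)
  ultimately show ?thesis using k by simp
qed

lemma code_full_blocks:
  assumes "x0 \<in> C" "\<not> partial x0"
  obtains k0 where "k = a * k0" "1 \<le> k0" "k0 \<le> b - 1"
    "profile x0 = replicate_mset (b - k0) 0 + replicate_mset k0 a"
proof -
  define n0 where "n0 = count (profile x0) 0"
  define k0 where "k0 = count (profile x0) a"
  have "\<forall>U\<in>P. card (x0 \<inter> U) \<in> {0, a}" using full_block_values assms(2) by blast
  then have profile: "profile x0 = replicate_mset n0 0 + replicate_mset k0 a"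
    using profile_two_values two_le_a unfolding n0_def k0_def by simp
  then have "b = n0 + k0" "k = a * k0"
    using size_profile[of x0] sum_profile[of x0] code_ksubset[OF assms(1)]
      by (auto simp: ksubsets_def)
  moreover have "1 \<le> k0" using \<open>k = a * k0\<close> two_le_k by (cases k0) auto
  moreover have "k0 \<noteq> b" using \<open>k = a * k0\<close> k_le card_V by auto
  ultimately show thesis using that[of k0] profile by simp
qed

lemma code_union_of_blocks:
  assumes "x0 \<in> C" "\<not> partial x0" "k = a * k0"
  shows "\<exists>C0. C0 \<subseteq> ksubsets P k0 \<and> C = (\<lambda>S. \<Union>S) ` C0"
proof (intro exI conjI)
  let ?C0 = "{S. S \<subseteq> P \<and> \<Union>S \<in> C}"
  show "?C0 \<subseteq> ksubsets P k0"
  proof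
    fix S assume S: "S \<in> ?C0"
    then have "card (\<Union>S) = a * card S" "card (\<Union>S) = k"
      using card_Union_blocks code_ksubset by (auto simp: ksubsets_def)
    then have "a * card S = a * k0" using assms(3) by auto
    then show "S \<in> ksubsets P k0" using S two_le_a by (simp add: ksubsets_def)
  qed
  have "x \<in> (\<lambda>S. \<Union>S) ` ?C0" if "x \<in> C" for x
  proof -
    have "\<not> partial x" using code_partial assms(1,2) that by blast
    then have "x = \<Union>{U \<in> P. U \<subseteq> x}"
      using Union_full_blocks code_ksubset that by (auto simp: ksubsets_def)
    then show ?thesis using that by (intro image_eqI[of _ _ "{U \<in> P. U \<subseteq> x}"]) auto
  qed
  then show "C = (\<lambda>S. \<Union>S) ` ?C0" by blast
qed

definition code_type_B :: bool where
  "code_type_B \<longleftrightarrow> (k \<le> a \<and> C = type_code V k P {#k#})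
    \<or> (k + a \<ge> card V \<and> C = type_code V k P ({#k + a - card V#} + replicate_mset (b - 1) a))
    \<or> (k \<le> b \<and> C = type_code V k P (replicate_mset k 1))
    \<or> (k + b \<ge> card V \<and> C = type_code V k P
          (replicate_mset (card V - k) (a - 1) + replicate_mset (b + k - card V) a))
    \<or> (\<exists>c. k = c * b \<and> 1 < c \<and> c \<le> a - 1 \<and> C = type_code V k P (replicate_mset b c))
    \<or> (odd k \<and> a \<ge> 3 \<and> b = 2 \<and> C = type_code V k P {#(k - 1) div 2, (k + 1) div 2#})
    \<or> (odd k \<and> a = 2 \<and> b \<ge> 3 \<and> C = type_code V k P ({#1#} + replicate_mset ((k - 1) div 2) 2))"

definition code_type_C :: bool where
  "code_type_C \<longleftrightarrow> 4 \<le> b \<and>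
    (\<exists>k0 C0. k = a * k0 \<and> 1 \<le> k0 \<and> k0 \<le> b - 1 \<and> C0 \<subseteq> ksubsets P k0 \<and> C = (\<lambda>S. \<Union>S) ` C0)"

lemma partial_code_type_B:
  assumes "x0 \<in> C" "partial x0"
  shows code_type_B
proof -
  let ?s = "\<lambda>U. card (x0 \<inter> U)"
  interpret unique_changing_move P a ?s by (rule changing_moves_unique[OF assms])
  obtain i where "i \<in> P" "0 < ?s i" "?s i < a" using assms(2) by (auto simp: partial_def)
  then show ?thesis
  proof (cases rule: profile_classification)
    case single
    then show ?thesis unfolding code_type_B_def using code_type_single_block[OF assms(1)] by simp
  next
    case cosingle
    then show ?thesis unfolding code_type_B_def using code_type_single_nonfull_block[OF assms(1)]
      by simp
  next
    case spread
    then show ?thesis unfolding code_type_B_def using code_type_spread[OF assms] by simp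
  next
    case cospread
    then show ?thesis unfolding code_type_B_def using code_type_cospread[OF assms] by simp
  next
    case (uniform c)
    show ?thesis
    proof (cases "c = 1")
      case True
      then show ?thesis unfolding code_type_B_def using code_type_spread[OF assms] uniform by simp
    next
      case False
      then show ?thesis unfolding code_type_B_def using code_type_uniform[OF assms uniform] by simp
    qed
  next
    case two_blocks
    then show ?thesis unfolding code_type_B_def using code_type_two_blocks[OF assms] by simp
  next
    case pairs
    then show ?thesis unfolding code_type_B_def using code_type_pairs[OF assms] by simp
  qed
qed

lemma full_blocks_code_type_B_or_C:
  assumes "x0 \<in> C" "\<not> partial x0"
  shows "code_type_B \<or> code_type_C"
proof -
  obtain k0 where k0: "k = a * k0" "1 \<le> k0" "k0 \<le> b - 1"
    and profile: "profile x0 = replicate_mset (b - k0) 0 + replicate_mset k0 a"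
    by (rule code_full_blocks[OF assms])
  have empty_iff: "card (x0 \<inter> U) = 0 \<longleftrightarrow> card (x0 \<inter> U) \<noteq> a" if "U \<in> P" for U
    using full_block_values[OF assms(2) that] two_le_a by auto
  consider "4 \<le> b" | "k0 = 1" | "b - k0 = 1" using k0 by linarith
  then show ?thesis
  proof cases
    case 1
    then show ?thesis unfolding code_type_C_def using code_union_of_blocks[OF assms k0(1)] k0
      by blast
  next
    case 2
    then have "count (profile x0) a = 1" using profile two_le_a by simp
    then obtain U0 where "U0 \<in> P" "card (x0 \<inter> U0) = a" "\<forall>U\<in>P. U \<noteq> U0 \<longrightarrow> card (x0 \<inter> U) \<noteq> a"
      by (rule unique_block_with_value)
    then show ?thesis unfolding code_type_B_def
      using code_type_single_block[OF assms(1)] empty_iff two_le_a by simp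
  next
    case 3
    then have "count (profile x0) 0 = 1" using profile two_le_a by simp
    then obtain U0 where "U0 \<in> P" "card (x0 \<inter> U0) = 0" "\<forall>U\<in>P. U \<noteq> U0 \<longrightarrow> card (x0 \<inter> U) \<noteq> 0"
      by (rule unique_block_with_value)
    then show ?thesis using code_type_single_nonfull_block[OF assms(1)] empty_iff two_le_a
      unfolding code_type_B_def by simp
  qed
qed

lemma code_type_B_or_C: "code_type_B \<or> code_type_C"
proof -
  obtain x0 where "x0 \<in> C" using code by (auto simp: is_code_def)
  then show ?thesis using partial_code_type_B full_blocks_code_type_B_or_C by blast
qed

end

theorem proposition4p7:
  fixes V :: "'a set" and k :: nat and C :: "'a set set" and G :: "('a \<Rightarrow> 'a) set"
  assumes "finite V"
    and "2 \<le> k" and "k + 2 \<le> card V"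
    and "is_code V k C"
    and "perm_group_on V G"
    and "stabilises_code G C"
    and "neighbour_transitive V k G C"
    and "transitive_on V G"
    and "imprimitive_on V G"
  shows "(\<exists>P a b. uniform_partition V P a b \<and> card V = a * b \<and> a > 1 \<and> b > 1 \<and>
            ( (k \<le> a \<and> C = type_code V k P {#k#})
            \<or> (k + a \<ge> card V \<and> C = type_code V k P ({#k + a - card V#} + replicate_mset (b - 1) a))
            \<or> (k \<le> b \<and> C = type_code V k P (replicate_mset k 1))
            \<or> (k + b \<ge> card V \<and>
                 C = type_code V k P (replicate_mset (card V - k) (a - 1) + replicate_mset (b + k - card V) a))
            \<or> (\<exists>c. k = c * b \<and> 1 < c \<and> c \<le> a - 1 \<and> C = type_code V k P (replicate_mset b c))
            \<or> (odd k \<and> a \<ge> 3 \<and> b = 2 \<and> C = type_code V k P {#(k - 1) div 2, (k + 1) div 2#})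
            \<or> (odd k \<and> a = 2 \<and> b \<ge> 3 \<and>
                 C = type_code V k P ({#1#} + replicate_mset ((k - 1) div 2) 2))))
       \<or> (\<exists>P a b k0 C0. uniform_partition V P a b \<and> card V = a * b \<and> a > 1 \<and> b \<ge> 4 \<and>
            k = a * k0 \<and> 1 \<le> k0 \<and> k0 \<le> b - 1 \<and> C0 \<subseteq> ksubsets P k0 \<and>
            C = (\<lambda>S. \<Union>S) ` C0)"
proof -
  obtain P where "partition_on V P" "P \<noteq> {V}" "P \<noteq> (\<lambda>x. {x}) ` V" "\<forall>g\<in>G. \<forall>U\<in>P. g ` U \<in> P"
    using assms(9) unfolding imprimitive_on_def by (elim exE conjE)
  then interpret imprimitive_code V G P k C
    using assms by unfold_locales auto
  have partition: "uniform_partition V P a b" "card V = a * b" "a > 1" "b > 1"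
    using uniform_partition card_V two_le_a two_le_b by auto
  from code_type_B_or_C show ?thesis
  proof
    assume type_B: code_type_B
    show ?thesis
      by (rule disjI1, intro exI[of _ P] exI[of _ a] exI[of _ b] conjI partition
          type_B[unfolded code_type_B_def])
  next
    assume code_type_C
    then obtain k0 C0 where type_C: "4 \<le> b" "k = a * k0" "1 \<le> k0" "k0 \<le> b - 1"
      "C0 \<subseteq> ksubsets P k0" "C = (\<lambda>S. \<Union>S) ` C0"
      unfolding code_type_C_def by blast
    show ?thesis
      by (rule disjI2, intro exI[of _ P] exI[of _ a] exI[of _ b] exI[of _ k0] exI[of _ C0] conjI
          partition type_C)
  qed
qed

end
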